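(* Let $N \ge 1$. Then: (1) $f(N,1)=0$. (2) $f(N+1,\Delta) \geq f(N,\Delta)+1$ for $N \geq \Delta \geq 2$. (3) $f(N,\Delta+1) \geq f(N,\Delta)+1$ for $\Delta \ge 1$ and $N > \binom{\Delta+1}{2}$. (4) For $\Delta+1 \le N$: if $\Delta > \frac{N}{2}$ then $f(N,\Delta+1) \geq f(N,\Delta)$, and if $\Delta > \lceil \frac{N}{2} \rceil$ then $f(N,\Delta+1) \geq f(N,\Delta)+1$.
   Context: All graphs are finite and simple; $L(G)$ is the line graph of $G$; $e(\cdot)$, $\Delta(\cdot)$, $\delta(\cdot)$ denote number of edges, maximum degree and minimum degree. For integers $N \ge \Delta \ge 1$, $f(N,\Delta) = \max\{ e(L(G)) : e(G)=N, \Delta(G)=\Delta, \delta(G)\geq 1\}$, the maximum over all simple graphs $G$. *)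

theory Defs
  imports Complex_Main
begin

text \<open>A finite simple graph without isolated vertices is represented by its edge set:
  a finite set of 2-element vertex sets (vertices taken from nat; every finite graph
  is isomorphic to one on nat). Its vertex set is the union of its edges, so
  minimum degree is at least 1 by construction.\<close>

definition simple_graph :: "nat set set \<Rightarrow> bool" where
  "simple_graph E \<longleftrightarrow> finite E \<and> (\<forall>e\<in>E. card e = 2)"

definition verts :: "nat set set \<Rightarrow> nat set" where
  "verts E = \<Union>E"

definition deg :: "nat set set \<Rightarrow> nat \<Rightarrow> nat" where
  "deg E v = card {e\<in>E. v \<in> e}"

definition max_deg :: "nat set set \<Rightarrow> nat" where
  "max_deg E = Max (deg E ` verts E)"

definition min_deg :: "nat set set \<Rightarrow> nat" where
  "min_deg E = Min (deg E ` verts E)"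

definition line_graph_edges :: "nat set set \<Rightarrow> nat" where
  "line_graph_edges E = card {{e1, e2} | e1 e2. e1 \<in> E \<and> e2 \<in> E \<and> e1 \<noteq> e2 \<and> e1 \<inter> e2 \<noteq> {}}"

definition f :: "nat \<Rightarrow> nat \<Rightarrow> nat" where
  "f N D = Max {line_graph_edges E | E. simple_graph E \<and> card E = N \<and> max_deg E = D \<and> min_deg E \<ge> 1}"

end

theory Submission
  imports Defs
begin

(* Every inequality comes from a local surgery on a graph G attaining f N D, driven by the
   identity L(G + xy) = L(G) + deg x + deg y for a new edge xy.
   Subdividing an edge by a new vertex w adds one edge and exactly one adjacent pair, and changes
   no degree except deg w = 2.
   For the bounds in D, fix v with deg v = D and an edge xy avoiding v. If vx is not an edge,
   replacing xy by vx raises the maximum degree to D + 1 and L by D + 1 - deg y >= 1; when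
   N > C(D+1, 2) such an edge exists, since otherwise every edge lies in the closed neighbourhood
   of v. If v is adjacent to both x and y, replace xy by an edge from v to a new vertex instead:
   L changes by D + 2 - deg x - deg y >= 2D - N - 1, as three distinct vertices have degree sum
   at most N + 3. *)

definition adjacent_edge_pairs :: "nat set set \<Rightarrow> nat set set set" where
  "adjacent_edge_pairs E = {{e1, e2} | e1 e2. e1 \<in> E \<and> e2 \<in> E \<and> e1 \<noteq> e2 \<and> e1 \<inter> e2 \<noteq> {}}"

lemma line_graph_edges_eq_card_adjacent_edge_pairs:
  "line_graph_edges E = card (adjacent_edge_pairs E)"
  by (simp add: line_graph_edges_def adjacent_edge_pairs_def)

lemma simple_graph_finite: "simple_graph E \<Longrightarrow> finite E"
  by (simp add: simple_graph_def)

lemma simple_graph_Diff: "simple_graph E \<Longrightarrow> simple_graph (E - A)"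
  unfolding simple_graph_def by auto

lemma simple_graph_insert: "simple_graph E \<Longrightarrow> a \<noteq> b \<Longrightarrow> simple_graph (insert {a, b} E)"
  unfolding simple_graph_def by auto

lemma simple_graph_edge_eq:
  "simple_graph E \<Longrightarrow> e \<in> E \<Longrightarrow> a \<in> e \<Longrightarrow> b \<in> e \<Longrightarrow> a \<noteq> b \<Longrightarrow> e = {a, b}"
  unfolding simple_graph_def by (auto simp: card_2_iff)

lemma simple_graph_obtain_edge:
  assumes "simple_graph E" "e \<in> E"
  obtains a b where "e = {a, b}" "a \<noteq> b"
  using assms unfolding simple_graph_def by (meson card_2_iff)

lemma edges_at_two_vertices_subset:
  "simple_graph E \<Longrightarrow> a \<noteq> b \<Longrightarrow> {e\<in>E. a \<in> e} \<inter> {e\<in>E. b \<in> e} \<subseteq> {{a, b}}"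
  using simple_graph_edge_eq by blast

lemma finite_verts: "simple_graph E \<Longrightarrow> finite (verts E)"
  unfolding simple_graph_def verts_def by (intro finite_Union) (auto intro: card_ge_0_finite)

lemma ex_fresh_vertex: "simple_graph E \<Longrightarrow> \<exists>w. w \<notin> verts E"
  using finite_verts ex_new_if_finite infinite_UNIV_nat by blast

lemma in_verts: "e \<in> E \<Longrightarrow> u \<in> e \<Longrightarrow> u \<in> verts E"
  unfolding verts_def by blast

lemma deg_eq_0: "z \<notin> verts E \<Longrightarrow> deg E z = 0"
  unfolding deg_def verts_def by (auto simp: card_eq_0_iff)

lemma deg_ge_1: "simple_graph E \<Longrightarrow> z \<in> verts E \<Longrightarrow> 1 \<le> deg E z"
  unfolding deg_def verts_def using simple_graph_finite
  by (fastforce simp: Suc_le_eq card_gt_0_iff)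

lemma deg_le_card: "finite E \<Longrightarrow> deg E z \<le> card E"
  unfolding deg_def by (rule card_mono) auto

lemma deg_insert:
  "finite E \<Longrightarrow> e \<notin> E \<Longrightarrow> deg (insert e E) z = deg E z + (if z \<in> e then 1 else 0)"
  unfolding deg_def by (auto simp: insert_compr[symmetric] Collect_conj_eq)

lemma deg_Diff_singleton:
  "finite E \<Longrightarrow> e \<in> E \<Longrightarrow> deg E z = deg (E - {e}) z + (if z \<in> e then 1 else 0)"
  using deg_insert[of "E - {e}" e z] by (simp add: insert_absorb)

lemma adjacent_edge_pairs_insert:
  "adjacent_edge_pairs (insert e E) =
     adjacent_edge_pairs E \<union> (\<lambda>e'. {e, e'}) ` {e'\<in>E. e' \<noteq> e \<and> e' \<inter> e \<noteq> {}}"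
proof (intro equalityI subsetI)
  fix p assume "p \<in> adjacent_edge_pairs (insert e E)"
  then obtain e1 e2 where p: "p = {e1, e2}" and e12: "e1 \<in> insert e E" "e2 \<in> insert e E"
    "e1 \<noteq> e2" "e1 \<inter> e2 \<noteq> {}"
    unfolding adjacent_edge_pairs_def by blast
  consider "e1 = e" | "e2 = e" | "e1 \<in> E" "e2 \<in> E"
    using e12 by blast
  then show "p \<in> adjacent_edge_pairs E \<union> (\<lambda>e'. {e, e'}) ` {e'\<in>E. e' \<noteq> e \<and> e' \<inter> e \<noteq> {}}"
  proof cases
    case 1
    then show ?thesis using p e12 by blast
  next
    case 2
    then have "p = {e, e1}" using p by (simp add: insert_commute)
    then show ?thesis using 2 e12 by blast
  next
    case 3
    then show ?thesis using p e12 unfolding adjacent_edge_pairs_def by blast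
  qed
qed (auto simp: adjacent_edge_pairs_def)

lemma line_graph_edges_insert:
  assumes E: "simple_graph E" and "x \<noteq> y" "{x, y} \<notin> E"
  shows "line_graph_edges (insert {x, y} E) = line_graph_edges E + deg E x + deg E y"
proof -
  let ?S = "{e\<in>E. e \<noteq> {x, y} \<and> e \<inter> {x, y} \<noteq> {}}"
  have fin: "finite E" using E by (rule simple_graph_finite)
  have "adjacent_edge_pairs E \<subseteq> Pow E"
    unfolding adjacent_edge_pairs_def by auto
  then have "adjacent_edge_pairs E \<inter> (\<lambda>e. {{x, y}, e}) ` ?S = {}"
    using assms(3) by auto
  moreover have "finite (adjacent_edge_pairs E)"
    using \<open>adjacent_edge_pairs E \<subseteq> Pow E\<close> fin finite_subset by blast
  moreover have "card ((\<lambda>e. {{x, y}, e}) ` ?S) = card ?S"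
    by (rule card_image) (auto simp: inj_on_def doubleton_eq_iff)
  moreover have "?S = {e\<in>E. x \<in> e} \<union> {e\<in>E. y \<in> e}"
    using assms(3) by auto
  moreover have "{e\<in>E. x \<in> e} \<inter> {e\<in>E. y \<in> e} = {}"
    using edges_at_two_vertices_subset[OF E \<open>x \<noteq> y\<close>] assms(3) by blast
  ultimately show ?thesis
    using fin unfolding line_graph_edges_eq_card_adjacent_edge_pairs adjacent_edge_pairs_insert deg_def
    by (simp add: card_Un_disjoint)
qed

lemma line_graph_edges_le_choose: "finite E \<Longrightarrow> line_graph_edges E \<le> card E choose 2"
proof -
  assume "finite E"
  have "adjacent_edge_pairs E \<subseteq> {A. A \<subseteq> E \<and> card A = 2}"
    unfolding adjacent_edge_pairs_def by (auto simp: card_insert_if)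
  then have "card (adjacent_edge_pairs E) \<le> card {A. A \<subseteq> E \<and> card A = 2}"
    using \<open>finite E\<close> by (intro card_mono) auto
  then show ?thesis
    unfolding line_graph_edges_eq_card_adjacent_edge_pairs using n_subsets[OF \<open>finite E\<close>] by simp
qed

lemma line_graph_edges_eq_0_if_deg_le_1:
  assumes "finite E" "\<And>z. deg E z \<le> 1"
  shows "line_graph_edges E = 0"
proof -
  have "adjacent_edge_pairs E = {}"
  proof (rule ccontr)
    assume "adjacent_edge_pairs E \<noteq> {}"
    then obtain e1 e2 w where "e1 \<in> E" "e2 \<in> E" "e1 \<noteq> e2" "w \<in> e1" "w \<in> e2"
      unfolding adjacent_edge_pairs_def by blast
    then have "card {e1, e2} \<le> deg E w"
      unfolding deg_def using \<open>finite E\<close> by (intro card_mono) auto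
    with \<open>e1 \<noteq> e2\<close> assms(2)[of w] show False by simp
  qed
  then show ?thesis by (simp add: line_graph_edges_eq_card_adjacent_edge_pairs)
qed

definition admissible :: "nat set set \<Rightarrow> nat \<Rightarrow> nat \<Rightarrow> bool" where
  "admissible E N D \<longleftrightarrow> simple_graph E \<and> card E = N \<and> max_deg E = D \<and> min_deg E \<ge> 1"

lemma f_eq_Max_admissible: "f N D = Max {line_graph_edges E | E. admissible E N D}"
  by (simp add: f_def admissible_def)

text \<open>The hypothesis \<open>1 \<le> N\<close> matters: for the empty graph \<^const>\<open>max_deg\<close> is the
  unspecified value \<open>Max {}\<close>.\<close>

lemma admissible_iff:
  assumes "1 \<le> N" "1 \<le> D"
  shows "admissible E N D \<longleftrightarrow>
    simple_graph E \<and> card E = N \<and> (\<forall>z. deg E z \<le> D) \<and> (\<exists>v. deg E v = D)"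
proof
  assume "admissible E N D"
  then have E: "simple_graph E" "card E = N" and D: "Max (deg E ` verts E) = D"
    unfolding admissible_def max_deg_def by auto
  obtain e where "e \<in> E"
    using E(2) \<open>1 \<le> N\<close> by fastforce
  moreover obtain a b where "e = {a, b}"
    using simple_graph_obtain_edge[OF E(1) \<open>e \<in> E\<close>] by blast
  ultimately have "verts E \<noteq> {}"
    using in_verts by blast
  then have "D \<in> deg E ` verts E" "\<forall>z \<in> verts E. deg E z \<le> D"
    using D finite_verts[OF E(1)] by (auto simp del: Max_in intro!: Max_in)
  then show "simple_graph E \<and> card E = N \<and> (\<forall>z. deg E z \<le> D) \<and> (\<exists>v. deg E v = D)"
    using E deg_eq_0 by (metis imageE zero_le)
next
  assume "simple_graph E \<and> card E = N \<and> (\<forall>z. deg E z \<le> D) \<and> (\<exists>v. deg E v = D)"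
  then obtain v where E: "simple_graph E" "card E = N" "\<And>z. deg E z \<le> D" and v: "deg E v = D"
    by blast
  have "v \<in> verts E"
    using v deg_eq_0 \<open>1 \<le> D\<close> by fastforce
  then have "max_deg E = D"
    unfolding max_deg_def using finite_verts[OF E(1)] E(3) v by (intro Max_eqI) auto
  moreover have "min_deg E \<ge> 1"
    unfolding min_deg_def using finite_verts[OF E(1)] \<open>v \<in> verts E\<close> deg_ge_1[OF E(1)]
    by (subst Min_ge_iff) auto
  ultimately show "admissible E N D"
    using E unfolding admissible_def by blast
qed

lemma finite_line_graph_edges_admissible: "finite {line_graph_edges E | E. admissible E N D}"
proof (rule finite_subset)
  show "{line_graph_edges E | E. admissible E N D} \<subseteq> {..N choose 2}"
    using line_graph_edges_le_choose simple_graph_finite by (auto simp: admissible_def)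
qed simp

lemma line_graph_edges_le_f: "admissible E N D \<Longrightarrow> line_graph_edges E \<le> f N D"
  unfolding f_eq_Max_admissible using finite_line_graph_edges_admissible by (rule Max_ge) blast

lemma ex_graph_with_max_deg:
  assumes "1 \<le> D"
  shows "\<exists>E. simple_graph E \<and> card E = D + k \<and> (\<forall>z. deg E z \<le> D) \<and> deg E 0 = D"
proof (induction k)
  case 0
  define S where "S = (\<lambda>i. {0, i}) ` {1..D}"
  have "card S = D"
    unfolding S_def by (subst card_image) (auto simp: inj_on_def doubleton_eq_iff)
  moreover have "simple_graph S"
    unfolding simple_graph_def S_def by auto
  moreover have "{e\<in>S. 0 \<in> e} = S"
    unfolding S_def by auto
  ultimately show ?case
    using deg_le_card[of S] unfolding deg_def by (auto simp: simple_graph_finite)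
next
  case (Suc k)
  then obtain E where E: "simple_graph E" "card E = D + k" "\<forall>z. deg E z \<le> D" "deg E 0 = D"
    by blast
  obtain a where a: "\<forall>x\<in>verts E. x < a"
    using finite_verts[OF E(1)] finite_nat_set_iff_bounded by blast
  have "0 \<in> verts E"
    using E(4) \<open>1 \<le> D\<close> deg_eq_0 by fastforce
  then have fresh: "a \<notin> verts E" "Suc a \<notin> verts E" "0 \<notin> {a, Suc a}"
    using a by fastforce+
  then have "{a, Suc a} \<notin> E"
    using in_verts by blast
  then have deg: "deg (insert {a, Suc a} E) z = deg E z + (if z \<in> {a, Suc a} then 1 else 0)" for z
    using deg_insert simple_graph_finite[OF E(1)] by blast
  have "simple_graph (insert {a, Suc a} E)"
    using simple_graph_insert[OF E(1)] by simp
  moreover have "card (insert {a, Suc a} E) = D + Suc k"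
    using \<open>{a, Suc a} \<notin> E\<close> E(2) simple_graph_finite[OF E(1)] by simp
  moreover have "\<forall>z. deg (insert {a, Suc a} E) z \<le> D"
    using deg E(3) deg_eq_0 fresh \<open>1 \<le> D\<close> by auto
  moreover have "deg (insert {a, Suc a} E) 0 = D"
    using deg E(4) fresh by auto
  ultimately show ?case by blast
qed

lemma f_attained:
  assumes "1 \<le> D" "D \<le> N"
  obtains G where "admissible G N D" "line_graph_edges G = f N D"
proof -
  obtain E where "simple_graph E" "card E = D + (N - D)" "\<forall>z. deg E z \<le> D" "deg E 0 = D"
    using ex_graph_with_max_deg[OF assms(1)] by blast
  then have "admissible E N D"
    using assms admissible_iff[of N D] by auto
  then have "f N D \<in> {line_graph_edges E | E. admissible E N D}"
    unfolding f_eq_Max_admissible using finite_line_graph_edges_admissible by (intro Max_in) auto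
  then obtain G where "admissible G N D" "f N D = line_graph_edges G"
    by blast
  with that show thesis
    by simp
qed

lemma f_max_deg_1:
  assumes "1 \<le> N"
  shows "f N 1 = 0"
proof -
  obtain G where "admissible G N 1" "line_graph_edges G = f N 1"
    using f_attained[of 1 N] assms by blast
  moreover have "finite G" "\<And>z. deg G z \<le> 1"
    using \<open>admissible G N 1\<close> admissible_iff[of N 1] assms simple_graph_finite by auto
  ultimately show ?thesis
    using line_graph_edges_eq_0_if_deg_le_1 by simp
qed

lemma subdivide_edge:
  assumes G: "simple_graph G" and uv: "{u, v} \<in> G" "u \<noteq> v" and w: "w \<notin> verts G"
  defines "G' \<equiv> insert {v, w} (insert {u, w} (G - {{u, v}}))"
  shows "simple_graph G'" "card G' = card G + 1" "line_graph_edges G' = line_graph_edges G + 1"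
    and "deg G' w = 2" "z \<noteq> w \<Longrightarrow> deg G' z = deg G z"
proof -
  define G0 where "G0 = G - {{u, v}}"
  define G1 where "G1 = insert {u, w} G0"
  have fin: "finite G" using G by (rule simple_graph_finite)
  have G0: "simple_graph G0" "finite G0"
    using G fin unfolding G0_def by (auto intro: simple_graph_Diff)
  have uw: "u \<noteq> w" "v \<noteq> w"
    using w uv in_verts by blast+
  have new: "{u, v} \<notin> G0" "{u, w} \<notin> G0" "{v, w} \<notin> G1"
    using w in_verts uv uw unfolding G0_def G1_def by (auto simp: doubleton_eq_iff)
  have G1: "simple_graph G1" "finite G1"
    using G0 uw unfolding G1_def by (auto intro: simple_graph_insert)
  have G_eq: "G = insert {u, v} G0"
    using uv unfolding G0_def by auto
  have "deg G0 w = 0"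
    using deg_eq_0[OF w] deg_Diff_singleton[OF fin uv(1), of w] unfolding G0_def by simp
  have deg_G: "deg G z = deg G0 z + (if z \<in> {u, v} then 1 else 0)" for z
    unfolding G_eq using G0(2) new(1) by (rule deg_insert)
  have G'_eq: "G' = insert {v, w} G1"
    unfolding G'_def G1_def G0_def ..
  have deg_G1: "deg G1 z = deg G0 z + (if z \<in> {u, w} then 1 else 0)" for z
    unfolding G1_def using G0(2) new(2) by (rule deg_insert)
  have deg_G': "deg G' z = deg G1 z + (if z \<in> {v, w} then 1 else 0)" for z
    unfolding G'_eq using G1(2) new(3) by (rule deg_insert)
  show "simple_graph G'"
    unfolding G'_eq using G1(1) uw(2) by (rule simple_graph_insert)
  show "card G' = card G + 1"
    unfolding G'_eq G_eq using new G0(2) by (simp add: G1_def)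
  have "line_graph_edges G = line_graph_edges G0 + deg G0 u + deg G0 v"
    unfolding G_eq using G0(1) uv(2) new(1) by (rule line_graph_edges_insert)
  moreover have "line_graph_edges G1 = line_graph_edges G0 + deg G0 u + deg G0 w"
    unfolding G1_def using G0(1) uw(1) new(2) by (rule line_graph_edges_insert)
  moreover have "line_graph_edges G' = line_graph_edges G1 + deg G1 v + deg G1 w"
    unfolding G'_eq using G1(1) uw(2) new(3) by (rule line_graph_edges_insert)
  ultimately show "line_graph_edges G' = line_graph_edges G + 1"
    using deg_G1[of v] deg_G1[of w] \<open>deg G0 w = 0\<close> uv(2) uw by simp
  show "deg G' w = 2"
    using deg_G'[of w] deg_G1[of w] \<open>deg G0 w = 0\<close> by simp
  show "z \<noteq> w \<Longrightarrow> deg G' z = deg G z"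
    using deg_G'[of z] deg_G1[of z] deg_G[of z] uv(2) by auto
qed

lemma f_Suc_edges_ge:
  assumes "1 \<le> N" "2 \<le> D" "D \<le> N"
  shows "f N D + 1 \<le> f (N + 1) D"
proof -
  obtain G where "admissible G N D" and extremal: "line_graph_edges G = f N D"
    using f_attained assms by (metis one_le_numeral order_trans)
  then obtain v0 where G: "simple_graph G" "card G = N" "\<forall>z. deg G z \<le> D" and v0: "deg G v0 = D"
    using admissible_iff assms by auto
  obtain e where "e \<in> G"
    using G(2) assms(1) by fastforce
  then obtain u v where uv: "{u, v} \<in> G" "u \<noteq> v"
    using simple_graph_obtain_edge[OF G(1)] by metis
  obtain w where w: "w \<notin> verts G"
    using ex_fresh_vertex[OF G(1)] by blast
  define G' where "G' = insert {v, w} (insert {u, w} (G - {{u, v}}))"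
  note G' = subdivide_edge[OF G(1) uv w, folded G'_def]
  have "v0 \<noteq> w"
    using v0 deg_eq_0[OF w] assms(2) by auto
  then have "admissible G' (N + 1) D"
    using G G' v0 assms(2) admissible_iff[of "N + 1" D] by (metis le_add2 one_le_numeral order_trans)
  then show ?thesis
    using line_graph_edges_le_f G'(3) extremal by fastforce
qed

lemma rewire_edge:
  assumes G: "simple_graph G" "\<forall>u. deg G u \<le> D" and v: "deg G v = D"
    and xy: "{x, y} \<in> G" "x \<noteq> y" "v \<notin> {x, y}"
    and z: "z \<noteq> v" "{v, z} \<notin> G"
  defines "G' \<equiv> insert {v, z} (G - {{x, y}})"
  shows "admissible G' (card G) (D + 1)"
    and "line_graph_edges G' + deg (G - {{x, y}}) x + deg (G - {{x, y}}) y =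
      line_graph_edges G + D + deg (G - {{x, y}}) z"
proof -
  define G0 where "G0 = G - {{x, y}}"
  have fin: "finite G" using G(1) by (rule simple_graph_finite)
  have G0: "simple_graph G0" "finite G0"
    using G(1) fin unfolding G0_def by (auto intro: simple_graph_Diff)
  have new: "{x, y} \<notin> G0" "{v, z} \<notin> G0"
    using z(2) unfolding G0_def by auto
  have G_eq: "G = insert {x, y} G0"
    using xy(1) unfolding G0_def by auto
  have deg_G: "deg G u = deg G0 u + (if u \<in> {x, y} then 1 else 0)" for u
    unfolding G_eq using G0(2) new(1) by (rule deg_insert)
  have G'_eq: "G' = insert {v, z} G0"
    unfolding G'_def G0_def ..
  have deg_G': "deg G' u = deg G0 u + (if u \<in> {v, z} then 1 else 0)" for u
    unfolding G'_eq using G0(2) new(2) by (rule deg_insert)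
  have "card G \<noteq> 0"
    using xy(1) fin by auto
  moreover have "simple_graph G'"
    unfolding G'_eq using simple_graph_insert[OF G0(1)] z(1) by simp
  moreover have "card G' = card G"
    unfolding G'_eq using G_eq G0(2) new by simp
  moreover have "deg G' u \<le> D + 1" for u
    using deg_G'[of u] deg_G[of u] G(2)[rule_format, of u] by simp
  moreover have "deg G' v = D + 1"
    using deg_G'[of v] deg_G[of v] v xy(3) by simp
  ultimately show "admissible G' (card G) (D + 1)"
    using admissible_iff[of "card G" "D + 1" G'] by auto
  have "line_graph_edges G = line_graph_edges G0 + deg G0 x + deg G0 y"
    unfolding G_eq using G0(1) xy(2) new(1) by (rule line_graph_edges_insert)
  moreover have "line_graph_edges G' = line_graph_edges G0 + deg G0 v + deg G0 z"
    unfolding G'_eq using G0(1) z(1)[symmetric] new(2) by (rule line_graph_edges_insert)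
  ultimately show "line_graph_edges G' + deg (G - {{x, y}}) x + deg (G - {{x, y}}) y =
      line_graph_edges G + D + deg (G - {{x, y}}) z"
    using deg_G[of v] v xy(3) unfolding G0_def by simp
qed

lemma rewire_edge_to_endpoint:
  assumes G: "simple_graph G" "\<forall>u. deg G u \<le> D" and v: "deg G v = D"
    and xy: "{x, y} \<in> G" "x \<noteq> y" "v \<notin> {x, y}" and "{v, x} \<notin> G"
  shows "line_graph_edges G + 1 \<le> f (card G) (D + 1)"
proof -
  have "x \<noteq> v"
    using xy(3) by blast
  note rewire = rewire_edge[OF G v xy this \<open>{v, x} \<notin> G\<close>]
  have "deg G y = deg (G - {{x, y}}) y + 1"
    using deg_Diff_singleton[OF simple_graph_finite[OF G(1)] xy(1)] by simp
  then have "line_graph_edges G + 1 \<le> line_graph_edges (insert {v, x} (G - {{x, y}}))"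
    using rewire(2) G(2)[rule_format, of y] by linarith
  also have "\<dots> \<le> f (card G) (D + 1)"
    using rewire(1) by (rule line_graph_edges_le_f)
  finally show ?thesis .
qed

lemma rewire_edge_to_new_vertex:
  assumes G: "simple_graph G" "\<forall>u. deg G u \<le> D" and v: "deg G v = D" "1 \<le> D"
    and xy: "{x, y} \<in> G" "x \<noteq> y" "v \<notin> {x, y}"
  shows "line_graph_edges G + D + 2 \<le> f (card G) (D + 1) + deg G x + deg G y"
proof -
  have fin: "finite G" using G(1) by (rule simple_graph_finite)
  obtain w where w: "w \<notin> verts G"
    using ex_fresh_vertex[OF G(1)] by blast
  have "w \<noteq> v"
    using w v deg_eq_0 by force
  have "{v, w} \<notin> G"
    using w in_verts by blast
  have "deg (G - {{x, y}}) w = 0"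
    using w deg_eq_0 deg_Diff_singleton[OF fin xy(1), of w] by simp
  note rewire = rewire_edge[OF G v(1) xy \<open>w \<noteq> v\<close> \<open>{v, w} \<notin> G\<close>]
  have "line_graph_edges (insert {v, w} (G - {{x, y}})) \<le> f (card G) (D + 1)"
    using rewire(1) by (rule line_graph_edges_le_f)
  then show ?thesis
    using rewire(2) \<open>deg (G - {{x, y}}) w = 0\<close>
      deg_Diff_singleton[OF fin xy(1), of x] deg_Diff_singleton[OF fin xy(1), of y] by simp
qed

lemma ex_edge_avoiding_vertex:
  assumes "simple_graph G" "deg G v < card G"
  shows "\<exists>x y. {x, y} \<in> G \<and> x \<noteq> y \<and> v \<notin> {x, y}"
proof -
  have "{e\<in>G. v \<in> e} \<noteq> G"
    using assms(2) unfolding deg_def by (metis less_irrefl)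
  then obtain e where "e \<in> G" "v \<notin> e"
    by blast
  moreover obtain x y where "e = {x, y}" "x \<noteq> y"
    using simple_graph_obtain_edge[OF assms(1) \<open>e \<in> G\<close>] .
  ultimately show ?thesis
    by blast
qed

lemma ex_edge_nonadjacent_to_vertex:
  assumes G: "simple_graph G" and many: "(deg G v + 1) choose 2 < card G"
  shows "\<exists>x y. {x, y} \<in> G \<and> x \<noteq> y \<and> v \<notin> {x, y} \<and> {v, x} \<notin> G"
proof (rule ccontr)
  assume "\<not> ?thesis"
  then have closed: "{v, x} \<in> G" if "{x, y} \<in> G" "x \<noteq> y" "v \<notin> {x, y}" for x y
    using that by blast
  define S where "S = insert v {u. {v, u} \<in> G}"
  have "inj_on (\<lambda>u. {v, u}) {u. {v, u} \<in> G}"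
    by (auto simp: inj_on_def doubleton_eq_iff)
  moreover have "(\<lambda>u. {v, u}) ` {u. {v, u} \<in> G} \<subseteq> {e\<in>G. v \<in> e}"
    by auto
  ultimately have "card {u. {v, u} \<in> G} \<le> deg G v"
    unfolding deg_def using simple_graph_finite[OF G] by (intro card_inj_on_le) auto
  moreover have "{u. {v, u} \<in> G} \<subseteq> verts G"
    using in_verts by blast
  then have "finite {u. {v, u} \<in> G}"
    using finite_verts[OF G] by (rule finite_subset)
  ultimately have S: "finite S" "card S \<le> deg G v + 1"
    unfolding S_def by (auto simp: card_insert_if)
  have "G \<subseteq> {A. A \<subseteq> S \<and> card A = 2}"
  proof
    fix e assume "e \<in> G"
    then obtain a b where ab: "e = {a, b}" "a \<noteq> b"
      using simple_graph_obtain_edge[OF G] by metis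
    have "a \<in> S \<and> b \<in> S"
    proof (cases "v \<in> {a, b}")
      case True
      then show ?thesis
        using \<open>e \<in> G\<close> ab unfolding S_def by (auto simp: insert_commute)
    next
      case False
      then have "{v, a} \<in> G" "{v, b} \<in> G"
        using closed[of a b] closed[of b a] \<open>e \<in> G\<close> ab by (auto simp: insert_commute)
      then show ?thesis
        unfolding S_def by blast
    qed
    then show "e \<in> {A. A \<subseteq> S \<and> card A = 2}"
      using ab by auto
  qed
  then have "card G \<le> card S choose 2"
    using card_mono[of "{A. A \<subseteq> S \<and> card A = 2}" G] n_subsets[OF S(1)] S(1) by simp
  also have "\<dots> \<le> (deg G v + 1) choose 2"
    using S(2) by (rule binomial_right_mono)
  finally show False
    using many by simp
qed

lemma deg_sum_three_le:
  assumes G: "simple_graph G" and "x \<noteq> y" "x \<noteq> v" "y \<noteq> v"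
  shows "deg G x + deg G y + deg G v \<le> card G + 3"
proof -
  define Ex Ey Ev where "Ex = {e\<in>G. x \<in> e}" and "Ey = {e\<in>G. y \<in> e}" and "Ev = {e\<in>G. v \<in> e}"
  have fin: "finite Ex" "finite Ey" "finite Ev" "finite G"
    using simple_graph_finite[OF G] unfolding Ex_def Ey_def Ev_def by auto
  have "Ex \<inter> Ey \<subseteq> {{x, y}}"
    using edges_at_two_vertices_subset[OF G \<open>x \<noteq> y\<close>] unfolding Ex_def Ey_def .
  then have "card (Ex \<inter> Ey) \<le> 1"
    using card_mono[of "{{x, y}}"] by simp
  moreover have "(Ex \<union> Ey) \<inter> Ev \<subseteq> {{x, v}, {y, v}}"
    using edges_at_two_vertices_subset[OF G] assms unfolding Ex_def Ey_def Ev_def by blast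
  then have "card ((Ex \<union> Ey) \<inter> Ev) \<le> card {{x, v}, {y, v}}"
    by (intro card_mono) auto
  then have "card ((Ex \<union> Ey) \<inter> Ev) \<le> 2"
    by (simp add: card_insert_if split: if_splits)
  moreover have "card (Ex \<union> Ey \<union> Ev) \<le> card G"
    using fin unfolding Ex_def Ey_def Ev_def by (intro card_mono) auto
  ultimately show ?thesis
    using card_Un_Int[OF fin(1,2)] card_Un_Int[of "Ex \<union> Ey" Ev] fin unfolding deg_def Ex_def Ey_def Ev_def
    by simp
qed

lemma f_Suc_max_deg_ge_if_many_edges:
  assumes "1 \<le> D" "(D + 1) choose 2 < N"
  shows "f N D + 1 \<le> f N (D + 1)"
proof -
  have "D \<le> (D + 1) choose 2"
    using assms(1) by (simp add: numeral_2_eq_2)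
  then have "D < N" "1 \<le> N"
    using assms(2) by linarith+
  obtain G where "admissible G N D" and extremal: "line_graph_edges G = f N D"
    using f_attained assms(1) \<open>D < N\<close> by (metis less_imp_le)
  then obtain v where G: "simple_graph G" "card G = N" "\<forall>z. deg G z \<le> D" and v: "deg G v = D"
    using admissible_iff \<open>1 \<le> N\<close> assms(1) by auto
  then obtain x y where "{x, y} \<in> G" "x \<noteq> y" "v \<notin> {x, y}" "{v, x} \<notin> G"
    using ex_edge_nonadjacent_to_vertex assms(2) by blast
  then show ?thesis
    using rewire_edge_to_endpoint[OF G(1,3) v] G(2) extremal by simp
qed

lemma f_Suc_max_deg_ge_if_large_deg:
  assumes "1 \<le> D" "D + 1 \<le> N" "k \<le> 1" "N + 1 + k \<le> 2 * D"
  shows "f N D + k \<le> f N (D + 1)"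
proof -
  obtain G where "admissible G N D" and extremal: "line_graph_edges G = f N D"
    using f_attained assms(1,2) by (metis add_leD1)
  then obtain v where G: "simple_graph G" "card G = N" "\<forall>z. deg G z \<le> D" and v: "deg G v = D"
    using admissible_iff assms(1,2) by (metis add_leD2)
  then obtain x y where xy: "{x, y} \<in> G" "x \<noteq> y" "v \<notin> {x, y}"
    using ex_edge_avoiding_vertex[OF G(1), of v] v G(2) assms(2) by auto
  note rewire_to_endpoint = rewire_edge_to_endpoint[OF G(1,3) v]
  consider "{v, x} \<notin> G" | "{v, y} \<notin> G" | "{v, x} \<in> G" "{v, y} \<in> G"
    by blast
  then show ?thesis
  proof cases
    case 1
    then show ?thesis
      using rewire_to_endpoint[OF xy] G(2) extremal assms(3) by simp
  next
    case 2
    moreover have "{y, x} \<in> G" "v \<notin> {y, x}"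
      using xy by (auto simp: insert_commute)
    ultimately show ?thesis
      using rewire_to_endpoint[of y x] xy(2) G(2) extremal assms(3) by simp
  next
    case 3
    have "deg G x + deg G y + D \<le> N + 3"
      using deg_sum_three_le[OF G(1) xy(2)] xy(3) v G(2) by auto
    moreover have "line_graph_edges G + D + 2 \<le> f N (D + 1) + deg G x + deg G y"
      using rewire_edge_to_new_vertex[OF G(1,3) v assms(1) xy] G(2) by simp
    ultimately show ?thesis
      using extremal assms(4) by linarith
  qed
qed

theorem mainTheorem11:
  fixes N :: nat
  assumes "N \<ge> 1"
  shows "f N 1 = 0 \<and>
    (\<forall>D. N \<ge> D \<and> D \<ge> 2 \<longrightarrow> f (N + 1) D \<ge> f N D + 1) \<and>
    (\<forall>D. D \<ge> 1 \<and> N > (D + 1) choose 2 \<longrightarrow> f N (D + 1) \<ge> f N D + 1) \<and>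
    (\<forall>D. D + 1 \<le> N \<longrightarrow>
           (real D > real N / 2 \<longrightarrow> f N (D + 1) \<ge> f N D) \<and>
           (int D > \<lceil>real N / 2\<rceil> \<longrightarrow> f N (D + 1) \<ge> f N D + 1))"
proof (intro conjI allI impI)
  show "f N 1 = 0"
    using assms by (rule f_max_deg_1)
next
  fix D assume "N \<ge> D \<and> D \<ge> 2"
  then show "f (N + 1) D \<ge> f N D + 1"
    using f_Suc_edges_ge assms by blast
next
  fix D assume "D \<ge> 1 \<and> N > (D + 1) choose 2"
  then show "f N (D + 1) \<ge> f N D + 1"
    using f_Suc_max_deg_ge_if_many_edges by blast
next
  fix D assume "D + 1 \<le> N" "real D > real N / 2"
  then have "1 \<le> D" "N + 1 + 0 \<le> 2 * D"
    by linarith+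
  then show "f N (D + 1) \<ge> f N D"
    using f_Suc_max_deg_ge_if_large_deg[of D N 0] \<open>D + 1 \<le> N\<close> by simp
next
  fix D assume "D + 1 \<le> N" "int D > \<lceil>real N / 2\<rceil>"
  then have "real D \<ge> real N / 2 + 1"
    using le_of_int_ceiling[of "real N / 2"] by linarith
  then have "1 \<le> D" "N + 1 + 1 \<le> 2 * D"
    by linarith+
  then show "f N (D + 1) \<ge> f N D + 1"
    using f_Suc_max_deg_ge_if_large_deg[of D N 1] \<open>D + 1 \<le> N\<close> by simp
qed

end
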